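(* Let $G=(V,E)$ be a $d$-regular $\epsilon$-spectral expander on $2n$ vertices with $0<\epsilon<1/2$ and $\epsilon n$ an integer. Then the number $m((1-\epsilon)n)$ of matchings of $G$ with exactly $(1-\epsilon)n$ edges satisfies $$m((1-\epsilon)n)\geq\left(\frac de\right)^{n(1-\epsilon)}e^{-2\epsilon n}.$$
   Context: For a graph on $2n$ vertices with adjacency matrix $A$ and degree matrix $D$, $\tilde A=D^{-1/2}AD^{-1/2}$ has eigenvalues $\lambda_1\geq\dots\geq\lambda_{2n}$, $\sigma_2(\tilde A)=\max\{\lambda_2,|\lambda_{2n}|\}$, and the graph is an $\epsilon$-spectral expander if $\sigma_2(\tilde A)\leq\epsilon$. *)

theory Defs
  imports "Jordan_Normal_Form.Char_Poly" "HOL-Library.Multiset"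
begin

definition simple_graph :: "nat \<Rightarrow> (nat \<Rightarrow> nat \<Rightarrow> bool) \<Rightarrow> bool" where
  "simple_graph N E \<longleftrightarrow> (\<forall>u v. E u v \<longrightarrow> u < N \<and> v < N \<and> u \<noteq> v \<and> E v u)"

definition degree :: "nat \<Rightarrow> (nat \<Rightarrow> nat \<Rightarrow> bool) \<Rightarrow> nat \<Rightarrow> nat" where
  "degree N E v = card {u. u < N \<and> E v u}"

definition regular :: "nat \<Rightarrow> (nat \<Rightarrow> nat \<Rightarrow> bool) \<Rightarrow> nat \<Rightarrow> bool" where
  "regular N E d \<longleftrightarrow> (\<forall>v<N. degree N E v = d)"

definition adj_mat :: "nat \<Rightarrow> (nat \<Rightarrow> nat \<Rightarrow> bool) \<Rightarrow> real mat" where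
  "adj_mat N E = mat N N (\<lambda>(i,j). if E i j then 1 else 0)"

text \<open>D^(-1/2) A D^(-1/2), with D the diagonal degree matrix.\<close>
definition norm_adj_mat :: "nat \<Rightarrow> (nat \<Rightarrow> nat \<Rightarrow> bool) \<Rightarrow> real mat" where
  "norm_adj_mat N E = mat N N (\<lambda>(i,j).
      (if E i j then 1 else 0) / (sqrt (real (degree N E i)) * sqrt (real (degree N E j))))"

definition eigenvalues_mset :: "real mat \<Rightarrow> real multiset" where
  "eigenvalues_mset A = Abs_multiset (\<lambda>x. order x (char_poly A))"

text \<open>Eigenvalues in non-increasing order: lambda_1 >= ... >= lambda_N (0-indexed list).\<close>
definition eigenvalues_desc :: "real mat \<Rightarrow> real list" where
  "eigenvalues_desc A = rev (sorted_list_of_multiset (eigenvalues_mset A))"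

definition sigma2 :: "real mat \<Rightarrow> real" where
  "sigma2 A = max (eigenvalues_desc A ! 1) \<bar>eigenvalues_desc A ! (dim_row A - 1)\<bar>"

definition spectral_expander :: "nat \<Rightarrow> (nat \<Rightarrow> nat \<Rightarrow> bool) \<Rightarrow> real \<Rightarrow> bool" where
  "spectral_expander N E \<epsilon> \<longleftrightarrow> sigma2 (norm_adj_mat N E) \<le> \<epsilon>"

definition matching :: "(nat \<Rightarrow> nat \<Rightarrow> bool) \<Rightarrow> nat set set \<Rightarrow> bool" where
  "matching E M \<longleftrightarrow> (\<forall>e\<in>M. \<exists>u v. e = {u, v} \<and> E u v) \<and>
     (\<forall>e\<in>M. \<forall>f\<in>M. e \<noteq> f \<longrightarrow> e \<inter> f = {})"

definition num_matchings :: "(nat \<Rightarrow> nat \<Rightarrow> bool) \<Rightarrow> nat \<Rightarrow> nat" where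
  "num_matchings E k = card {M. matching E M \<and> card M = k}"

end

theory Submission
  imports Defs "HOL-Analysis.Function_Topology" "HOL-Combinatorics.Multiset_Permutations"
begin

text \<open>
  Every matching with \<open>k\<close> edges can be listed in \<open>k!\<close> orders, so \<open>k! m(k)\<close> is the number of
  sequences of \<open>k\<close> pairwise disjoint edges. Such a sequence can be built greedily: once \<open>j\<close> edges
  are chosen, the \<open>2n - 2j\<close> uncovered vertices still span at least
  \<open>(d/n)(n - j)(n - (1 + \<epsilon>) j)\<close> edges. This is the lower half of the expander mixing lemma, and it
  only needs the smallest eigenvalue of the normalized adjacency matrix to be at least \<open>-\<epsilon>\<close>, which
  in turn bounds the quadratic form through the Rayleigh quotient. For \<open>k = (1 - \<epsilon>) n\<close> the product
  of these counts is at least \<open>k! (d/e)\<^sup>k\<close>: the factors \<open>n - j\<close> give \<open>k!\<close>, and comparing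
  \<open>\<Sum> ln (n - (1 + \<epsilon>) j)\<close> with an integral of \<open>ln\<close> gives \<open>(n/e)\<^sup>k\<close>. Hence \<open>m(k) \<ge> (d/e)\<^sup>k\<close>.
\<close>

section \<open>Real symmetric matrices\<close>

lemma order_prod_list_linear_factors:
  "order x (\<Prod>r\<leftarrow>rs. [:- r, 1:]) = count (mset rs) (x::real)"
proof (induction rs)
  case Nil
  then show ?case by (simp add: order_0I)
next
  case (Cons a rs)
  have "(\<Prod>r\<leftarrow>rs. [:- r, 1:]) \<noteq> (0::real poly)"
    by auto
  then have "[:- a, 1:] * (\<Prod>r\<leftarrow>rs. [:- r, 1:]) \<noteq> (0::real poly)"
    by (simp only: mult_eq_0_iff) simp
  then have "order x ([:- a, 1:] * (\<Prod>r\<leftarrow>rs. [:- r, 1:]))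
      = order x [:- a, 1:] + order x (\<Prod>r\<leftarrow>rs. [:- r, 1:])"
    by (rule order_mult)
  then show ?case
    using Cons by (simp add: order_linear')
qed

lemma eigenvalue_real_symmetric_is_real:
  fixes A :: "real mat"
  assumes A: "A \<in> carrier_mat N N"
    and sym: "\<And>i j. i < N \<Longrightarrow> j < N \<Longrightarrow> A $$ (i,j) = A $$ (j,i)"
    and ev: "eigenvalue (of_real_hom.mat_hom A) a"
  shows "Im a = 0"
proof -
  let ?B = "of_real_hom.mat_hom A :: complex mat"
  have B: "?B \<in> carrier_mat N N" using A by simp
  from ev obtain v where "eigenvector ?B v a" unfolding eigenvalue_def by auto
  then have v: "v \<in> carrier_vec N" and v0: "v \<noteq> 0\<^sub>v N" and Bv: "?B *\<^sub>v v = a \<cdot>\<^sub>v v"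
    using B unfolding eigenvector_def by auto
  have row: "(\<Sum>j<N. of_real (A $$ (i,j)) * v $ j) = a * v $ i" if "i < N" for i
  proof -
    have "(?B *\<^sub>v v) $ i = (\<Sum>j<N. of_real (A $$ (i,j)) * v $ j)"
      using that A v by (simp add: scalar_prod_def lessThan_atLeast0)
    then show ?thesis using Bv that v by simp
  qed
  define z where "z = (\<Sum>i<N. \<Sum>j<N. cnj (v $ i) * of_real (A $$ (i,j)) * v $ j)"
  define S where "S = (\<Sum>i<N. (cmod (v $ i))^2)"
  \<comment> \<open>\<open>z = v\<^sup>* A v\<close> equals \<open>a |v|\<^sup>2\<close> and is real because \<open>A\<close> is real symmetric.\<close>
  have "z = (\<Sum>i<N. a * (cnj (v $ i) * v $ i))"
    unfolding z_def by (simp add: row sum_distrib_left[symmetric] mult.assoc mult.left_commute)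
  also have "\<dots> = a * of_real S"
    unfolding S_def of_real_sum sum_distrib_left
    by (rule sum.cong) (simp_all add: complex_eq_iff cmod_def power2_eq_square)
  finally have za: "z = a * of_real S" .
  have "cnj z = (\<Sum>i<N. \<Sum>j<N. v $ i * of_real (A $$ (i,j)) * cnj (v $ j))"
    unfolding z_def by simp
  also have "\<dots> = (\<Sum>j<N. \<Sum>i<N. v $ i * of_real (A $$ (i,j)) * cnj (v $ j))"
    by (rule sum.swap)
  also have "\<dots> = z"
    unfolding z_def by (intro sum.cong refl) (simp add: sym mult_ac)
  finally have "Im z = 0" by (metis cnj.simps(2) neg_equal_zero)
  moreover have "S > 0"
  proof -
    from v0 v obtain i where i: "i < N" "v $ i \<noteq> 0" by fastforce
    have "(cmod (v $ i))^2 \<le> S"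
      unfolding S_def by (rule member_le_sum) (use i in auto)
    moreover have "(cmod (v $ i))^2 > 0" using i by simp
    ultimately show ?thesis by linarith
  qed
  ultimately show ?thesis using za by simp
qed

lemma char_poly_real_symmetric_splits:
  fixes A :: "real mat"
  assumes A: "A \<in> carrier_mat N N"
    and sym: "\<And>i j. i < N \<Longrightarrow> j < N \<Longrightarrow> A $$ (i,j) = A $$ (j,i)"
  obtains rs where "char_poly A = (\<Prod>r\<leftarrow>rs. [:- r, 1:])" "length rs = N"
proof -
  let ?B = "of_real_hom.mat_hom A :: complex mat"
  have B: "?B \<in> carrier_mat N N" using A by simp
  obtain as where as: "char_poly ?B = (\<Prod>a\<leftarrow>as. [:- a, 1:])" "length as = N"
    using char_poly_factorized[OF B] by blast
  have "Im a = 0" if "a \<in> set as" for a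
  proof (rule eigenvalue_real_symmetric_is_real[OF A sym])
    have "poly (char_poly ?B) a = 0" unfolding as(1) using that by (rule linear_poly_root)
    then show "eigenvalue ?B a" using eigenvalue_root_char_poly[OF B] by simp
  qed
  then have as_real: "as = map of_real (map Re as)"
    by (simp add: map_idI complex_eq_iff)
  interpret of_real_poly: map_poly_inj_comm_ring_hom "of_real :: real \<Rightarrow> complex" ..
  have "map_poly of_real (char_poly A)
      = map_poly (of_real :: real \<Rightarrow> complex) (\<Prod>r\<leftarrow>map Re as. [:- r, 1:])"
    unfolding of_real_hom.char_poly_hom[OF A, symmetric] as(1)
    by (subst as_real) (simp add: o_def of_real_poly.hom_prod_list of_real_hom.map_poly_pCons_hom)
  then have "char_poly A = (\<Prod>r\<leftarrow>map Re as. [:- r, 1:])"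
    by (rule of_real_poly.injectivity)
  then show ?thesis using that as(2) by (metis length_map)
qed

lemma last_eigenvalue_desc_le_root:
  fixes A :: "real mat"
  assumes A: "A \<in> carrier_mat N N"
    and sym: "\<And>i j. i < N \<Longrightarrow> j < N \<Longrightarrow> A $$ (i,j) = A $$ (j,i)"
    and root: "poly (char_poly A) \<mu> = 0"
  shows "eigenvalues_desc A ! (N - 1) \<le> \<mu>"
proof -
  obtain rs where rs: "char_poly A = (\<Prod>r\<leftarrow>rs. [:- r, 1:])" "length rs = N"
    using char_poly_real_symmetric_splits[OF A sym] .
  have "eigenvalues_mset A = mset rs"
    unfolding eigenvalues_mset_def rs(1) order_prod_list_linear_factors by simp
  then have desc: "eigenvalues_desc A = rev (sort rs)" unfolding eigenvalues_desc_def by simp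
  have "\<mu> \<in> set rs" using root unfolding rs(1) poly_prod_list_zero_iff by auto
  then obtain i where i: "i < length (sort rs)" "sort rs ! i = \<mu>"
    by (metis in_set_conv_nth set_sort)
  then have "eigenvalues_desc A ! (N - 1) = sort rs ! 0"
    unfolding desc using rs(2) by (simp add: rev_nth)
  also have "\<dots> \<le> sort rs ! i" by (rule sorted_nth_mono) (use i in auto)
  finally show ?thesis using i by simp
qed

definition quad_form :: "nat \<Rightarrow> real mat \<Rightarrow> (nat \<Rightarrow> real) \<Rightarrow> real" where
  "quad_form N A x = (\<Sum>i<N. \<Sum>j<N. A $$ (i,j) * x i * x j)"

definition sq_norm :: "nat \<Rightarrow> (nat \<Rightarrow> real) \<Rightarrow> real" where
  "sq_norm N x = (\<Sum>i<N. (x i)^2)"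

lemma sq_norm_nonneg: "0 \<le> sq_norm N x"
  unfolding sq_norm_def by (simp add: sum_nonneg)

lemma sq_norm_eq_0_iff: "sq_norm N x = 0 \<longleftrightarrow> (\<forall>i<N. x i = 0)"
  unfolding sq_norm_def by (subst sum_nonneg_eq_0_iff) auto

lemma quad_form_add_scaled:
  assumes sym: "\<And>i j. i < N \<Longrightarrow> j < N \<Longrightarrow> A $$ (i,j) = A $$ (j,i)"
  shows "quad_form N A (\<lambda>i. v i + t * w i)
       = quad_form N A v + 2 * t * (\<Sum>i<N. w i * (\<Sum>j<N. A $$ (i,j) * v j)) + t^2 * quad_form N A w"
proof -
  have expand: "A $$ (i,j) * (v i + t * w i) * (v j + t * w j) =
      A $$ (i,j) * v i * v j + t * (A $$ (i,j) * w i * v j) + t * (A $$ (i,j) * v i * w j)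
      + t^2 * (A $$ (i,j) * w i * w j)" for i j
    by (simp add: algebra_simps power2_eq_square)
  have "(\<Sum>i<N. \<Sum>j<N. A $$ (i,j) * v i * w j) = (\<Sum>j<N. \<Sum>i<N. A $$ (i,j) * v i * w j)"
    by (rule sum.swap)
  also have "\<dots> = (\<Sum>j<N. \<Sum>i<N. A $$ (j,i) * w j * v i)"
    by (intro sum.cong refl) (simp add: sym)
  finally have swap: "(\<Sum>i<N. \<Sum>j<N. A $$ (i,j) * v i * w j) = (\<Sum>i<N. \<Sum>j<N. A $$ (i,j) * w i * v j)" .
  have "(\<Sum>i<N. \<Sum>j<N. A $$ (i,j) * w i * v j) = (\<Sum>i<N. w i * (\<Sum>j<N. A $$ (i,j) * v j))"
    by (simp add: sum_distrib_left mult_ac)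
  with swap show ?thesis
    unfolding quad_form_def expand sum.distrib sum_distrib_left[symmetric] by simp
qed

lemma sq_norm_add_scaled:
  "sq_norm N (\<lambda>i. v i + t * w i) = sq_norm N v + 2 * t * (\<Sum>i<N. v i * w i) + t^2 * sq_norm N w"
proof -
  have "(v i + t * w i)^2 = (v i)^2 + 2 * t * (v i * w i) + t^2 * (w i)^2" for i
    by (simp add: power2_eq_square algebra_simps)
  then show ?thesis
    unfolding sq_norm_def by (simp add: sum.distrib sum_distrib_left)
qed

lemma linear_coeff_zero_if_quadratic_nonneg:
  fixes a b :: real
  assumes nonneg: "\<And>t. 0 \<le> a * t + b * t^2"
  shows "a = 0"
proof (rule ccontr)
  assume "a \<noteq> 0"
  define c where "c = \<bar>b\<bar> + 1"
  have c: "c > 0" unfolding c_def by simp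
  have "b * (a / c)^2 \<le> \<bar>b\<bar> * (a / c)^2" by (simp add: mult_right_mono)
  also have "\<dots> < c * (a / c)^2" using \<open>a \<noteq> 0\<close> c unfolding c_def by simp
  also have "\<dots> = a^2 / c" using c by (simp add: power2_eq_square)
  finally have "a * (- a / c) + b * (- a / c)^2 < 0"
    by (simp add: power2_eq_square)
  with nonneg show False by (meson not_le)
qed

lemma continuous_on_coordinate [continuous_intros]:
  "continuous_on S (\<lambda>x :: 'a \<Rightarrow> 'b :: topological_space. x i)"
  by (rule continuous_on_product_then_coordinatewise[OF continuous_on_id])

lemma compact_sq_norm_sphere:
  "compact {x :: nat \<Rightarrow> real. (\<forall>i\<ge>N. x i = 0) \<and> sq_norm N x = 1}" (is "compact ?S")
proof -
  define box :: "(nat \<Rightarrow> real) set" where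
    "box = PiE UNIV (\<lambda>i. if i < N then {-1..1} else {0})"
  have "compactin (product_topology (\<lambda>i. euclidean) UNIV) box"
    unfolding box_def compactin_PiE by auto
  then have box: "compact box" by (simp add: euclidean_product_topology)
  have closed: "closed ?S"
  proof -
    have "?S = (\<Inter>i\<in>{N..}. {x. x i = 0}) \<inter> {x. sq_norm N x = 1}" by auto
    moreover have "closed (\<Inter>i\<in>{N..}. {x :: nat \<Rightarrow> real. x i = 0})"
      by (intro closed_INT ballI closed_Collect_eq continuous_intros)
    moreover have "closed {x. sq_norm N x = 1}"
      unfolding sq_norm_def by (intro closed_Collect_eq continuous_intros)
    ultimately show ?thesis by auto
  qed
  have sub: "?S \<subseteq> box"
  proof
    fix x assume x: "x \<in> ?S"
    have "\<bar>x i\<bar> \<le> 1" if "i < N" for i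
    proof -
      have "(x i)^2 \<le> sq_norm N x"
        unfolding sq_norm_def by (rule member_le_sum) (use that in auto)
      then show ?thesis using x abs_le_square_iff[of "x i" 1] by simp
    qed
    then show "x \<in> box" using x unfolding box_def by (force simp: abs_le_iff)
  qed
  show ?thesis
    using compact_Int_closed[OF box closed] sub by (simp add: Int_absorb1)
qed

lemma rayleigh_minimizer_exists:
  assumes N: "0 < N"
  obtains v where "sq_norm N v = 1" "\<And>y. quad_form N A v * sq_norm N y \<le> quad_form N A y"
proof -
  define S where "S = {x :: nat \<Rightarrow> real. (\<forall>i\<ge>N. x i = 0) \<and> sq_norm N x = 1}"
  define e0 :: "nat \<Rightarrow> real" where "e0 i = (if i = 0 then 1 else 0)" for i
  have "e0 \<in> S"
    unfolding S_def sq_norm_def e0_def using N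
    by (simp add: power2_eq_square if_distrib cong: if_cong)
  then have "S \<noteq> {}" by auto
  moreover have "compact S"
    unfolding S_def by (rule compact_sq_norm_sphere)
  moreover have "continuous_on S (quad_form N A)"
    unfolding quad_form_def by (intro continuous_intros)
  ultimately obtain v where v: "v \<in> S"
    and min: "\<And>y. y \<in> S \<Longrightarrow> quad_form N A v \<le> quad_form N A y"
    using continuous_attains_inf by metis
  have "quad_form N A v * sq_norm N y \<le> quad_form N A y" for y
  proof (cases "sq_norm N y = 0")
    case True
    then have "quad_form N A y = 0" by (simp add: sq_norm_eq_0_iff quad_form_def)
    with True show ?thesis by simp
  next
    case False
    define c where "c = 1 / sqrt (sq_norm N y)"
    have c: "c^2 * sq_norm N y = 1"
      unfolding c_def using False sq_norm_nonneg[of N y] by (simp add: power_divide)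
    define z where "z i = (if i < N then c * y i else 0)" for i
    have "sq_norm N z = c^2 * sq_norm N y"
      unfolding sq_norm_def z_def by (simp add: sum_distrib_left power_mult_distrib)
    then have "z \<in> S" unfolding S_def z_def using c by simp
    moreover have "quad_form N A z = c^2 * quad_form N A y"
      unfolding quad_form_def z_def by (simp add: sum_distrib_left power2_eq_square mult_ac)
    ultimately have "quad_form N A v * sq_norm N y \<le> c^2 * quad_form N A y * sq_norm N y"
      using min[of z] sq_norm_nonneg[of N y] by (simp add: mult_right_mono)
    also have "\<dots> = quad_form N A y" using c by (simp add: algebra_simps)
    finally show ?thesis .
  qed
  then show ?thesis using that v unfolding S_def by blast
qed

lemma rayleigh_minimizer_eigenvector:
  assumes sym: "\<And>i j. i < N \<Longrightarrow> j < N \<Longrightarrow> A $$ (i,j) = A $$ (j,i)"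
    and v: "sq_norm N v = 1"
    and min: "\<And>y. quad_form N A v * sq_norm N y \<le> quad_form N A y"
    and i: "i < N"
  shows "(\<Sum>j<N. A $$ (i,j) * v j) = quad_form N A v * v i"
proof -
  define \<mu> where "\<mu> = quad_form N A v"
  define w where "w i = (\<Sum>j<N. A $$ (i,j) * v j) - \<mu> * v i" for i
  define L where "L = (\<Sum>i<N. w i * (\<Sum>j<N. A $$ (i,j) * v j))"
  define P where "P = (\<Sum>i<N. v i * w i)"
  have w_L_P: "sq_norm N w = L - \<mu> * P"
  proof -
    have "(w i)^2 = w i * (\<Sum>j<N. A $$ (i,j) * v j) - \<mu> * (v i * w i)" for i
      unfolding power2_eq_square by (subst (2) w_def) (simp add: algebra_simps)
    then show ?thesis
      unfolding sq_norm_def L_def P_def by (simp add: sum_subtractf sum_distrib_left)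
  qed
  \<comment> \<open>Minimality along the line \<open>v + t w\<close> leaves no room for a linear term in \<open>t\<close>.\<close>
  have "0 \<le> 2 * sq_norm N w * t + (quad_form N A w - \<mu> * sq_norm N w) * t^2" for t
  proof -
    have Q: "quad_form N A (\<lambda>i. v i + t * w i) = \<mu> + 2 * t * L + t^2 * quad_form N A w"
      unfolding \<mu>_def L_def by (rule quad_form_add_scaled[OF sym])
    have S: "sq_norm N (\<lambda>i. v i + t * w i) = 1 + 2 * t * P + t^2 * sq_norm N w"
      using sq_norm_add_scaled[of N v t w] v unfolding P_def by simp
    have "2 * sq_norm N w * t + (quad_form N A w - \<mu> * sq_norm N w) * t^2
        = quad_form N A (\<lambda>i. v i + t * w i) - \<mu> * sq_norm N (\<lambda>i. v i + t * w i)"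
      unfolding Q S w_L_P by (simp add: algebra_simps)
    moreover have "\<mu> * sq_norm N (\<lambda>i. v i + t * w i) \<le> quad_form N A (\<lambda>i. v i + t * w i)"
      unfolding \<mu>_def by (rule min)
    ultimately show ?thesis by simp
  qed
  then have "2 * sq_norm N w = 0"
    by (rule linear_coeff_zero_if_quadratic_nonneg)
  then have "w i = 0" using i by (simp add: sq_norm_eq_0_iff)
  then show ?thesis unfolding w_def \<mu>_def by simp
qed

lemma quad_form_ge_last_eigenvalue:
  fixes A :: "real mat"
  assumes A: "A \<in> carrier_mat N N"
    and sym: "\<And>i j. i < N \<Longrightarrow> j < N \<Longrightarrow> A $$ (i,j) = A $$ (j,i)"
    and N: "0 < N"
  shows "eigenvalues_desc A ! (N - 1) * sq_norm N x \<le> quad_form N A x"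
proof -
  obtain v where v: "sq_norm N v = 1"
    and min: "\<And>y. quad_form N A v * sq_norm N y \<le> quad_form N A y"
    using rayleigh_minimizer_exists[OF N, of A] by blast
  have "vec N v \<noteq> 0\<^sub>v N"
    using v sq_norm_eq_0_iff[of N v] by (metis index_vec index_zero_vec(1) zero_neq_one)
  moreover have "A *\<^sub>v vec N v = quad_form N A v \<cdot>\<^sub>v vec N v"
    using A rayleigh_minimizer_eigenvector[OF sym v min]
    by (intro eq_vecI) (simp_all add: scalar_prod_def lessThan_atLeast0)
  ultimately have "eigenvector A (vec N v) (quad_form N A v)"
    using A unfolding eigenvector_def by auto
  then have "poly (char_poly A) (quad_form N A v) = 0"
    using eigenvalue_root_char_poly[OF A] unfolding eigenvalue_def by blast
  then have "eigenvalues_desc A ! (N - 1) \<le> quad_form N A v"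
    using last_eigenvalue_desc_le_root[OF A sym] by blast
  then show ?thesis
    using min[of x] sq_norm_nonneg[of N x] by (meson mult_right_mono order_trans)
qed

section \<open>Sequences of disjoint edges\<close>

lemma simple_graph_edgeD:
  assumes "simple_graph N E" "E u v"
  shows "u < N" "v < N" "u \<noteq> v" "E v u"
  using assms unfolding simple_graph_def by blast+

definition matching_seqs :: "(nat \<Rightarrow> nat \<Rightarrow> bool) \<Rightarrow> nat \<Rightarrow> nat set list set" where
  "matching_seqs E k = {es. length es = k \<and> distinct es \<and> matching E (set es)}"

definition free_edges :: "(nat \<Rightarrow> nat \<Rightarrow> bool) \<Rightarrow> nat set \<Rightarrow> nat set set" where
  "free_edges E W = {e. (\<exists>u v. e = {u, v} \<and> E u v) \<and> disjnt e W}"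

lemma matching_seqs_0: "matching_seqs E 0 = {[]}"
  unfolding matching_seqs_def matching_def by auto

lemma matching_iff_pairwise_disjnt:
  "matching E M \<longleftrightarrow> (\<forall>e\<in>M. \<exists>u v. e = {u, v} \<and> E u v) \<and> pairwise disjnt M"
  unfolding matching_def pairwise_def disjnt_def by blast

lemma matching_insert_iff:
  assumes "e \<notin> M"
  shows "matching E (insert e M) \<longleftrightarrow>
    matching E M \<and> (\<exists>u v. e = {u, v} \<and> E u v) \<and> disjnt e (\<Union>M)"
  using assms unfolding matching_iff_pairwise_disjnt pairwise_insert
  by (auto simp: disjnt_sym)

lemma Cons_in_matching_seqs_iff:
  "e # es \<in> matching_seqs E (Suc k) \<longleftrightarrow>
    es \<in> matching_seqs E k \<and> e \<in> free_edges E (\<Union>(set es))"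
proof (cases "e \<in> set es")
  case True
  then have "\<not> disjnt e (\<Union>(set es))" if "\<exists>u v. e = {u, v} \<and> E u v"
    using that by (auto simp: disjnt_def)
  then show ?thesis
    using True unfolding matching_seqs_def free_edges_def by auto
next
  case False
  then show ?thesis
    unfolding matching_seqs_def free_edges_def by (auto simp: matching_insert_iff)
qed

lemma matching_seqs_Suc:
  "matching_seqs E (Suc k) = (\<lambda>(es, e). e # es) ` (SIGMA es:matching_seqs E k. free_edges E (\<Union>(set es)))"
proof (intro equalityI subsetI)
  fix xs assume xs: "xs \<in> matching_seqs E (Suc k)"
  then obtain e es where xs_eq: "xs = e # es" unfolding matching_seqs_def by (cases xs) auto
  from xs have "e # es \<in> matching_seqs E (Suc k)" unfolding xs_eq .
  then have "(es, e) \<in> (SIGMA es:matching_seqs E k. free_edges E (\<Union>(set es)))"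
    unfolding Cons_in_matching_seqs_iff by simp
  then show "xs \<in> (\<lambda>(es, e). e # es) ` (SIGMA es:matching_seqs E k. free_edges E (\<Union>(set es)))"
    unfolding xs_eq by (rule image_eqI[rotated]) simp
qed (auto simp: Cons_in_matching_seqs_iff)

lemma matching_subset_Pow:
  assumes "simple_graph N E" "matching E M"
  shows "M \<subseteq> Pow {..<N}"
  using assms unfolding simple_graph_def matching_def by fastforce

lemma finite_free_edges:
  assumes "simple_graph N E"
  shows "finite (free_edges E W)"
proof (rule finite_subset)
  show "free_edges E W \<subseteq> Pow {..<N}"
    using simple_graph_edgeD[OF assms] unfolding free_edges_def by blast
qed simp

lemma finite_matching_seqs:
  assumes "simple_graph N E"
  shows "finite (matching_seqs E k)"
proof (rule finite_subset)
  show "matching_seqs E k \<subseteq> {es. set es \<subseteq> Pow {..<N} \<and> length es = k}"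
    using matching_subset_Pow[OF assms] unfolding matching_seqs_def by auto
qed (simp add: finite_lists_length_eq)

lemma card_matching_seqs_Suc:
  assumes "simple_graph N E"
  shows "card (matching_seqs E (Suc k)) = (\<Sum>es\<in>matching_seqs E k. card (free_edges E (\<Union>(set es))))"
proof -
  have "inj_on (\<lambda>(es, e). e # es) (SIGMA es:matching_seqs E k. free_edges E (\<Union>(set es)))"
    by (rule inj_onI) auto
  then have "card (matching_seqs E (Suc k)) = card (SIGMA es:matching_seqs E k. free_edges E (\<Union>(set es)))"
    unfolding matching_seqs_Suc by (rule card_image)
  also have "\<dots> = (\<Sum>es\<in>matching_seqs E k. card (free_edges E (\<Union>(set es))))"
    by (rule card_SigmaI) (use finite_matching_seqs[OF assms] finite_free_edges[OF assms] in auto)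
  finally show ?thesis .
qed

lemma card_matching_seqs_ge_prod:
  assumes G: "simple_graph N E"
    and b: "\<And>j es. j < k \<Longrightarrow> es \<in> matching_seqs E j \<Longrightarrow>
      b j \<le> real (card (free_edges E (\<Union>(set es))))"
    and b_nonneg: "\<And>j. j < k \<Longrightarrow> 0 \<le> b j"
  shows "(\<Prod>j<k. b j) \<le> real (card (matching_seqs E k))"
  using b b_nonneg
proof (induction k)
  case 0
  then show ?case by (simp add: matching_seqs_0)
next
  case (Suc k)
  have "(\<Prod>j<Suc k. b j) = (\<Prod>j<k. b j) * b k" by simp
  also have "\<dots> \<le> real (card (matching_seqs E k)) * b k"
    using Suc by (simp add: mult_right_mono)
  also have "\<dots> = (\<Sum>es\<in>matching_seqs E k. b k)" by simp
  also have "\<dots> \<le> (\<Sum>es\<in>matching_seqs E k. real (card (free_edges E (\<Union>(set es)))))"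
    by (rule sum_mono) (use Suc.prems(1) in auto)
  also have "\<dots> = real (card (matching_seqs E (Suc k)))"
    unfolding card_matching_seqs_Suc[OF G] by simp
  finally show ?case .
qed

lemma card_matching_seqs:
  assumes G: "simple_graph N E"
  shows "card (matching_seqs E k) = fact k * num_matchings E k"
proof -
  define Ms where "Ms = {M. matching E M \<and> card M = k}"
  have Ms_Pow: "Ms \<subseteq> Pow (Pow {..<N})"
    using matching_subset_Pow[OF G] unfolding Ms_def by auto
  then have "finite Ms" by (rule finite_subset) simp
  have fin_M: "finite M" if "M \<in> Ms" for M
    using Ms_Pow that by (auto intro: finite_subset[of M "Pow {..<N}"])
  have disj: "\<forall>M\<in>Ms. \<forall>M'\<in>Ms. M \<noteq> M' \<longrightarrow>
      permutations_of_set M \<inter> permutations_of_set M' = {}"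
    by (auto simp: permutations_of_set_def)
  have "es \<in> matching_seqs E k \<longleftrightarrow> set es \<in> Ms \<and> distinct es" for es
    unfolding matching_seqs_def Ms_def by (auto simp: distinct_card)
  then have "matching_seqs E k = (\<Union>M\<in>Ms. permutations_of_set M)"
    unfolding permutations_of_set_def by blast
  also have "card \<dots> = (\<Sum>M\<in>Ms. card (permutations_of_set M))"
    by (rule card_UN_disjoint[OF \<open>finite Ms\<close> _ disj]) simp
  also have "\<dots> = (\<Sum>M\<in>Ms. fact k)"
    using fin_M by (intro sum.cong) (auto simp: Ms_def)
  finally show ?thesis unfolding num_matchings_def Ms_def by simp
qed

lemma card_Union_matching_seqs:
  assumes G: "simple_graph N E" and es: "es \<in> matching_seqs E k"
  shows "card (\<Union>(set es)) = 2 * k"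
proof -
  from es have es: "length es = k" "distinct es" "matching E (set es)"
    unfolding matching_seqs_def by auto
  have "card e = 2" if "e \<in> set es" for e
    using es(3) that simple_graph_edgeD(3)[OF G] unfolding matching_def by fastforce
  moreover have "pairwise disjnt (set es)"
    using es(3) unfolding matching_iff_pairwise_disjnt by blast
  ultimately have "card (\<Union>(set es)) = (\<Sum>e\<in>set es. 2)"
    by (subst card_Union_disjoint) (auto intro: card_ge_0_finite)
  then show ?thesis using es distinct_card by fastforce
qed

lemma bij_betw_doubleton_free_edges:
  assumes G: "simple_graph N E"
  shows "bij_betw (\<lambda>(u, v). {u, v})
    {(u, v). E u v \<and> u \<notin> W \<and> v \<notin> W \<and> u < v} (free_edges E W)"
  unfolding bij_betw_def
proof
  show "inj_on (\<lambda>(u, v). {u, v}) {(u, v). E u v \<and> u \<notin> W \<and> v \<notin> W \<and> u < v}"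
    by (rule inj_onI) (auto simp: doubleton_eq_iff)
  have "e \<in> (\<lambda>(u, v). {u, v}) ` {(u, v). E u v \<and> u \<notin> W \<and> v \<notin> W \<and> u < v}"
    if free: "e \<in> free_edges E W" for e
  proof -
    obtain u v where e: "e = {u, v}" and uv: "E u v" "u \<notin> W" "v \<notin> W"
      using free unfolding free_edges_def by auto
    show ?thesis
    proof (cases "u < v")
      case True
      with uv show ?thesis unfolding e by (auto intro: image_eqI[of _ _ "(u, v)"])
    next
      case False
      then have "v < u" using simple_graph_edgeD(3)[OF G uv(1)] by simp
      with uv simple_graph_edgeD(4)[OF G uv(1)] show ?thesis
        unfolding e by (auto simp: insert_commute intro: image_eqI[of _ _ "(v, u)"])
    qed
  qed
  then show "(\<lambda>(u, v). {u, v}) ` {(u, v). E u v \<and> u \<notin> W \<and> v \<notin> W \<and> u < v}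
      = free_edges E W"
    unfolding free_edges_def by auto
qed

lemma two_card_free_edges:
  assumes G: "simple_graph N E"
  shows "2 * card (free_edges E W) = card {(u, v). E u v \<and> u \<notin> W \<and> v \<notin> W}"
proof -
  define P where "P = {(u, v). E u v \<and> u \<notin> W \<and> v \<notin> W}"
  define P1 where "P1 = {(u, v). E u v \<and> u \<notin> W \<and> v \<notin> W \<and> u < v}"
  have "P \<subseteq> {..<N} \<times> {..<N}"
    using simple_graph_edgeD[OF G] unfolding P_def by auto
  then have "finite P" by (rule finite_subset) simp
  have "P = P1 \<union> prod.swap ` P1"
  proof (intro equalityI subrelI)
    fix u v assume uv: "(u, v) \<in> P"
    then have "u \<noteq> v" "(v, u) \<in> P"
      using simple_graph_edgeD[OF G] unfolding P_def by auto
    with uv show "(u, v) \<in> P1 \<union> prod.swap ` P1"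
      unfolding P_def P1_def by (cases "u < v") (auto intro: image_eqI[of _ _ "(v, u)"])
  qed (use simple_graph_edgeD(4)[OF G] in \<open>auto simp: P_def P1_def\<close>)
  moreover have "P1 \<inter> prod.swap ` P1 = {}" unfolding P1_def by auto
  ultimately have "card P = card P1 + card (prod.swap ` P1)"
    using \<open>finite P\<close> by (simp add: card_Un_disjoint)
  moreover have "card (prod.swap ` P1) = card P1"
    by (rule card_image) simp
  moreover have "card P1 = card (free_edges E W)"
    unfolding P1_def using bij_betw_doubleton_free_edges[OF G] by (rule bij_betw_same_card)
  ultimately show ?thesis unfolding P_def by simp
qed

section \<open>Expander mixing\<close>

lemma adj_mat_entry:
  "i < N \<Longrightarrow> j < N \<Longrightarrow> adj_mat N E $$ (i,j) = of_bool (E i j)"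
  unfolding adj_mat_def by simp

lemma adj_mat_symmetric:
  assumes "simple_graph N E" "i < N" "j < N"
  shows "adj_mat N E $$ (i,j) = adj_mat N E $$ (j,i)"
proof -
  have "E i j \<longleftrightarrow> E j i" using simple_graph_edgeD(4)[OF assms(1)] by blast
  then show ?thesis using assms(2,3) by (simp add: adj_mat_entry)
qed

lemma norm_adj_mat_regular:
  assumes "regular N E d" "i < N" "j < N"
  shows "norm_adj_mat N E $$ (i,j) = adj_mat N E $$ (i,j) / real d"
  using assms unfolding regular_def norm_adj_mat_def by (simp add: adj_mat_entry)

lemma adj_mat_row_sum:
  assumes "regular N E d" "i < N"
  shows "(\<Sum>j<N. adj_mat N E $$ (i,j)) = real d"
proof -
  have "(\<Sum>j<N. adj_mat N E $$ (i,j)) = real (card ({..<N} \<inter> {j. E i j}))"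
    using assms(2) by (simp add: adj_mat_entry)
  also have "{..<N} \<inter> {j. E i j} = {j. j < N \<and> E i j}" by auto
  finally show ?thesis using assms unfolding regular_def degree_def by simp
qed

lemma adj_mat_col_sum:
  assumes G: "simple_graph N E" and reg: "regular N E d" and j: "j < N"
  shows "(\<Sum>i<N. adj_mat N E $$ (i,j)) = real d"
proof -
  have "(\<Sum>i<N. adj_mat N E $$ (i,j)) = (\<Sum>i<N. adj_mat N E $$ (j,i))"
    by (rule sum.cong) (simp_all add: adj_mat_symmetric[OF G _ j])
  then show ?thesis using adj_mat_row_sum[OF reg j] by simp
qed

lemma sum_adj_mat_mult:
  assumes G: "simple_graph N E" and reg: "regular N E d"
  shows "(\<Sum>i<N. \<Sum>j<N. adj_mat N E $$ (i,j) * x j) = real d * (\<Sum>j<N. x j)"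
proof -
  have "(\<Sum>i<N. \<Sum>j<N. adj_mat N E $$ (i,j) * x j) = (\<Sum>j<N. (\<Sum>i<N. adj_mat N E $$ (i,j)) * x j)"
    by (subst sum.swap) (simp add: sum_distrib_right)
  also have "\<dots> = real d * (\<Sum>j<N. x j)"
    by (simp add: adj_mat_col_sum[OF G reg] sum_distrib_left)
  finally show ?thesis .
qed

lemma quad_form_adj_mat_ge:
  assumes G: "simple_graph N E" and reg: "regular N E d" and d: "0 < d"
    and exp: "spectral_expander N E \<epsilon>" and N: "0 < N"
  shows "- \<epsilon> * real d * sq_norm N x \<le> quad_form N (adj_mat N E) x"
proof -
  let ?A = "norm_adj_mat N E"
  have A: "?A \<in> carrier_mat N N" unfolding norm_adj_mat_def by simp
  have sym: "?A $$ (i,j) = ?A $$ (j,i)" if "i < N" "j < N" for i j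
    using that norm_adj_mat_regular[OF reg] adj_mat_symmetric[OF G] by simp
  have "- \<epsilon> \<le> eigenvalues_desc ?A ! (N - 1)"
    using exp A unfolding spectral_expander_def sigma2_def by auto
  then have "- \<epsilon> * sq_norm N x \<le> eigenvalues_desc ?A ! (N - 1) * sq_norm N x"
    using sq_norm_nonneg by (rule mult_right_mono)
  also have "\<dots> \<le> quad_form N ?A x"
    by (rule quad_form_ge_last_eigenvalue[OF A sym N])
  also have "\<dots> = quad_form N (adj_mat N E) x / real d"
    unfolding quad_form_def by (simp add: norm_adj_mat_regular[OF reg] sum_divide_distrib)
  finally show ?thesis using d by (simp add: field_simps)
qed

lemma quad_form_adj_mat_indicator:
  assumes G: "simple_graph N E"
  shows "quad_form N (adj_mat N E) (\<lambda>i. of_bool (i \<in> U))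
    = card {(u, v). E u v \<and> u \<in> U \<and> v \<in> U}"
proof -
  have "quad_form N (adj_mat N E) (\<lambda>i. of_bool (i \<in> U))
      = (\<Sum>(u, v)\<in>{..<N} \<times> {..<N}. of_bool (E u v \<and> u \<in> U \<and> v \<in> U))"
    unfolding quad_form_def sum.cartesian_product by (intro sum.cong refl) (auto simp: adj_mat_entry)
  also have "\<dots> = card (({..<N} \<times> {..<N}) \<inter> {(u, v). E u v \<and> u \<in> U \<and> v \<in> U})"
    by (simp add: case_prod_beta')
  also have "({..<N} \<times> {..<N}) \<inter> {(u, v). E u v \<and> u \<in> U \<and> v \<in> U}
      = {(u, v). E u v \<and> u \<in> U \<and> v \<in> U}"
    using simple_graph_edgeD[OF G] by auto
  finally show ?thesis .
qed

lemma expander_mixing_lower: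
  assumes G: "simple_graph N E" and reg: "regular N E d" and d: "0 < d"
    and exp: "spectral_expander N E \<epsilon>" and N: "0 < N" and U: "U \<subseteq> {..<N}"
  defines "s \<equiv> real (card U)"
  shows "real d * s^2 / N - \<epsilon> * real d * (s - s^2 / N)
    \<le> real (card {(u, v). E u v \<and> u \<in> U \<and> v \<in> U})"
proof -
  let ?A = "adj_mat N E"
  define ind where "ind i = (of_bool (i \<in> U) :: real)" for i
  define t where "t = - s / N"
  have sum_ind: "(\<Sum>i<N. ind i) = s"
    unfolding ind_def s_def using U by (simp add: Int_absorb1)
  have "(ind i)^2 = ind i" for i by (simp add: ind_def)
  then have sq_norm_ind: "sq_norm N ind = s"
    unfolding sq_norm_def using sum_ind by simp
  have cross: "(\<Sum>i<N. 1 * (\<Sum>j<N. ?A $$ (i,j) * ind j)) = real d * s"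
    using sum_adj_mat_mult[OF G reg] sum_ind by simp
  have quad_one: "quad_form N ?A (\<lambda>_. 1) = N * real d"
    unfolding quad_form_def by (simp add: adj_mat_row_sum[OF reg])
  have "quad_form N ?A (\<lambda>i. ind i + t * 1) = quad_form N ?A ind + 2 * t * (real d * s) + t^2 * (N * real d)"
    using quad_form_add_scaled[OF adj_mat_symmetric[OF G], where v = ind and t = t and w = "\<lambda>_. 1"]
      cross quad_one by simp
  also have "\<dots> = quad_form N ?A ind - real d * s^2 / N"
    unfolding t_def using N by (simp add: power2_eq_square field_simps)
  finally have quad: "quad_form N ?A (\<lambda>i. ind i + t * 1) = quad_form N ?A ind - real d * s^2 / N" .
  have "sq_norm N (\<lambda>i. ind i + t * 1) = s + 2 * t * s + t^2 * N"
    using sq_norm_add_scaled[where N = N and v = ind and t = t and w = "\<lambda>_. 1"] sq_norm_ind sum_ind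
    by (simp add: sq_norm_def)
  also have "\<dots> = s - s^2 / N"
    unfolding t_def using N by (simp add: power2_eq_square field_simps)
  finally have "sq_norm N (\<lambda>i. ind i + t * 1) = s - s^2 / N" .
  with quad have "real d * s^2 / N - \<epsilon> * real d * (s - s^2 / N) \<le> quad_form N ?A ind"
    using quad_form_adj_mat_ge[OF G reg d exp N, of "\<lambda>i. ind i + t * 1"] by simp
  then show ?thesis
    unfolding ind_def quad_form_adj_mat_indicator[OF G] .
qed

lemma two_card_free_edges_ge:
  assumes G: "simple_graph N E" and reg: "regular N E d" and d: "0 < d"
    and exp: "spectral_expander N E \<epsilon>" and N: "0 < N" and W: "W \<subseteq> {..<N}"
  defines "s \<equiv> real (N - card W)"
  shows "real d * s^2 / N - \<epsilon> * real d * (s - s^2 / N) \<le> 2 * real (card (free_edges E W))"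
proof -
  let ?U = "{..<N} - W"
  have "card ?U = N - card W"
    using W by (simp add: card_Diff_subset finite_subset)
  moreover have "{(u, v). E u v \<and> u \<in> ?U \<and> v \<in> ?U}
      = {(u, v). E u v \<and> u \<notin> W \<and> v \<notin> W}"
    using simple_graph_edgeD[OF G] by auto
  ultimately show ?thesis
    using expander_mixing_lower[OF G reg d exp N, of ?U] two_card_free_edges[OF G, of W]
    unfolding s_def by simp
qed

section \<open>Counting greedy matchings\<close>

definition ln_primitive :: "real \<Rightarrow> real" where
  "ln_primitive x = x * ln x - x"

lemma ln_primitive_diff_le:
  assumes b: "0 < b" and c: "0 < c"
  shows "ln_primitive (b + c) - ln_primitive b \<le> c * ln (b + c)"
proof -
  have "ln ((b + c) / b) \<le> (b + c) / b - 1" by (rule ln_le_minus_one) (use b c in simp)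
  then have "b * (ln (b + c) - ln b) \<le> c" using b c by (simp add: ln_div field_simps)
  then show ?thesis unfolding ln_primitive_def by (simp add: algebra_simps)
qed

lemma ln_primitive_diff_le_sum_ln:
  assumes c: "0 < c" and pos: "0 < x - c * real k"
  shows "ln_primitive x - ln_primitive (x - c * real k) \<le> c * (\<Sum>j<k. ln (x - c * real j))"
proof -
  define a where "a j = x - c * real j" for j
  have "ln_primitive (a j) - ln_primitive (a (Suc j)) \<le> c * ln (a j)" if "j < k" for j
  proof -
    have "c * real (Suc j) \<le> c * real k" using that c by simp
    then have "0 < a (Suc j)" using pos unfolding a_def by simp
    moreover have "a j = a (Suc j) + c" unfolding a_def by (simp add: algebra_simps)
    ultimately show ?thesis using ln_primitive_diff_le[of "a (Suc j)" c] c by simp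
  qed
  then have "(\<Sum>j<k. ln_primitive (a j) - ln_primitive (a (Suc j))) \<le> (\<Sum>j<k. c * ln (a j))"
    by (intro sum_mono) auto
  moreover have "(\<Sum>j<k. ln_primitive (a j) - ln_primitive (a (Suc j))) = ln_primitive (a 0) - ln_primitive (a k)"
    by (rule sum_lessThan_telescope')
  ultimately show ?thesis
    unfolding sum_distrib_left[symmetric] a_def by simp
qed

lemma prod_arith_progression_ge:
  fixes n \<epsilon> :: real and k :: nat
  assumes n: "0 < n" and \<epsilon>: "0 < \<epsilon>" "\<epsilon> < 1" and k: "real k = (1 - \<epsilon>) * n"
  shows "(n / exp 1)^k \<le> (\<Prod>j<k. n - (1 + \<epsilon>) * real j)"
proof -
  have last: "n - (1 + \<epsilon>) * real k = \<epsilon>^2 * n"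
    unfolding k by (simp add: algebra_simps power2_eq_square)
  then have last_pos: "0 < n - (1 + \<epsilon>) * real k" using \<epsilon> n by simp
  have pos: "0 < n - (1 + \<epsilon>) * real j" if "j < k" for j
  proof -
    have "(1 + \<epsilon>) * real j \<le> (1 + \<epsilon>) * real k" using that \<epsilon> by simp
    then show ?thesis using last_pos by simp
  qed
  have "ln_primitive n - ln_primitive (\<epsilon>^2 * n)
      = (1 + \<epsilon>) * (real k * ln n - real k) - 2 * \<epsilon>^2 * n * ln \<epsilon>"
    unfolding ln_primitive_def k using \<epsilon> n by (simp add: ln_mult ln_realpow algebra_simps power2_eq_square)
  moreover have "\<epsilon>^2 * n * ln \<epsilon> \<le> 0"
    using \<epsilon> n by (simp add: mult_nonneg_nonpos)
  moreover have "ln_primitive n - ln_primitive (\<epsilon>^2 * n)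
      \<le> (1 + \<epsilon>) * (\<Sum>j<k. ln (n - (1 + \<epsilon>) * real j))"
    using ln_primitive_diff_le_sum_ln[of "1 + \<epsilon>" n k] last_pos \<epsilon> unfolding last by simp
  ultimately have "(1 + \<epsilon>) * (real k * ln n - real k)
      \<le> (1 + \<epsilon>) * (\<Sum>j<k. ln (n - (1 + \<epsilon>) * real j))"
    by linarith
  then have "real k * ln n - real k \<le> (\<Sum>j<k. ln (n - (1 + \<epsilon>) * real j))"
    by (rule mult_left_le_imp_le) (use \<epsilon> in simp)
  moreover have "exp (\<Sum>j<k. ln (n - (1 + \<epsilon>) * real j)) = (\<Prod>j<k. n - (1 + \<epsilon>) * real j)"
    by (subst exp_sum) (auto intro!: prod.cong exp_ln pos)
  ultimately have "exp (real k * ln n - real k) \<le> (\<Prod>j<k. n - (1 + \<epsilon>) * real j)"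
    by (metis exp_le_cancel_iff)
  moreover have "exp (real k * ln n - real k) = (n / exp 1)^k"
    using n exp_of_nat_mult[of k 1] by (simp add: exp_diff exp_of_nat_mult power_divide)
  ultimately show ?thesis by simp
qed

lemma fact_le_prod_diff:
  assumes "k \<le> n"
  shows "fact k \<le> (\<Prod>j<k. real n - real j)"
proof -
  have "fact k = (\<Prod>j<k. real k - real j)"
    by (simp add: fact_prod_rev atLeast0LessThan)
  also have "\<dots> \<le> (\<Prod>j<k. real n - real j)"
    by (rule prod_mono) (use assms in auto)
  finally show ?thesis .
qed

lemma card_free_edges_matching_seq_ge:
  assumes G: "simple_graph (2 * n) E" and reg: "regular (2 * n) E d" and d: "0 < d"
    and exp: "spectral_expander (2 * n) E \<epsilon>" and n: "0 < n"
    and es: "es \<in> matching_seqs E j"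
  shows "real d / n * (real n - real j) * (real n - (1 + \<epsilon>) * real j)
    \<le> real (card (free_edges E (\<Union>(set es))))"
proof -
  let ?W = "\<Union>(set es)"
  have W: "?W \<subseteq> {..<2 * n}"
    using es matching_subset_Pow[OF G] unfolding matching_seqs_def by blast
  have card_W: "card ?W = 2 * j"
    by (rule card_Union_matching_seqs[OF G es])
  then have "2 * j \<le> 2 * n"
    using card_mono[OF _ W] by simp
  then have s: "real (2 * n - card ?W) = 2 * (real n - real j)"
    unfolding card_W by simp
  have "2 * (real d / n * (real n - real j) * (real n - (1 + \<epsilon>) * real j))
      = real d * (2 * (real n - real j))^2 / real (2 * n)
        - \<epsilon> * real d * (2 * (real n - real j) - (2 * (real n - real j))^2 / real (2 * n))"
    using n by (simp add: field_simps power2_eq_square)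
  also have "\<dots> \<le> 2 * real (card (free_edges E ?W))"
    using two_card_free_edges_ge[OF G reg d exp _ W] n unfolding s by simp
  finally show ?thesis by simp
qed

lemma num_matchings_expander_ge:
  assumes G: "simple_graph (2 * n) E" and reg: "regular (2 * n) E d" and d: "0 < d"
    and exp: "spectral_expander (2 * n) E \<epsilon>" and n: "0 < n"
    and \<epsilon>: "0 < \<epsilon>" "\<epsilon> < 1" and k: "real k = (1 - \<epsilon>) * real n"
  shows "(real d / exp 1)^k \<le> real (num_matchings E k)"
proof -
  define b where "b j = real d / n * (real n - real j) * (real n - (1 + \<epsilon>) * real j)" for j
  have "0 \<le> \<epsilon> * real n" using \<epsilon> by simp
  then have "real k \<le> real n" using k by (simp add: algebra_simps)
  then have "k \<le> n" by simp
  have "(1 + \<epsilon>) * real k \<le> real n"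
    unfolding k using \<epsilon> by (simp add: algebra_simps power2_eq_square[symmetric])
  then have b_nonneg: "0 \<le> b j" if "j < k" for j
    using that \<open>k \<le> n\<close> \<epsilon> unfolding b_def
    by (intro mult_nonneg_nonneg) (auto intro: order_trans[OF mult_left_mono[of "real j" "real k"]])
  have "(\<Prod>j<k. b j)
      = (real d / n)^k * (\<Prod>j<k. real n - real j) * (\<Prod>j<k. real n - (1 + \<epsilon>) * real j)"
    unfolding b_def prod.distrib by simp
  also have "\<dots> \<ge> (real d / n)^k * fact k * (real n / exp 1)^k"
    using fact_le_prod_diff[OF \<open>k \<le> n\<close>] prod_arith_progression_ge[of "real n" \<epsilon> k] n \<epsilon> k
      order_trans[OF fact_ge_zero fact_le_prod_diff[OF \<open>k \<le> n\<close>]]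
    by (intro mult_mono) auto
  also have "(real d / n)^k * fact k * (real n / exp 1)^k = fact k * (real d / exp 1)^k"
    using n by (simp add: field_simps)
  finally have "fact k * (real d / exp 1)^k \<le> (\<Prod>j<k. b j)" .
  also have "\<dots> \<le> real (card (matching_seqs E k))"
    by (rule card_matching_seqs_ge_prod[OF G _ b_nonneg])
      (use card_free_edges_matching_seq_ge[OF G reg d exp n] in \<open>simp add: b_def\<close>)
  also have "\<dots> = fact k * real (num_matchings E k)"
    unfolding card_matching_seqs[OF G] by simp
  finally show ?thesis by simp
qed

lemma num_matchings_0:
  assumes "simple_graph N E"
  shows "num_matchings E 0 = 1"
  using card_matching_seqs[OF assms, of 0] by (simp add: matching_seqs_0)

lemma of_nat_nat_floor_of_Ints:
  assumes "x \<in> \<int>" "0 \<le> x"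
  shows "real (nat \<lfloor>x\<rfloor>) = x"
  using assms by (metis Ints_cases floor_of_int of_int_0_le_iff of_nat_nat)

theorem lemma4p1:
  fixes n d :: nat and E :: "nat \<Rightarrow> nat \<Rightarrow> bool" and \<epsilon> :: real
  assumes "simple_graph (2 * n) E"
    and "regular (2 * n) E d"
    and "spectral_expander (2 * n) E \<epsilon>"
    and "0 < \<epsilon>" and "\<epsilon> < 1 / 2"
    and "\<epsilon> * real n \<in> \<int>"
  shows "real (num_matchings E (nat \<lfloor>(1 - \<epsilon>) * real n\<rfloor>))
           \<ge> (real d / exp 1) powr (real n * (1 - \<epsilon>)) * exp (- 2 * \<epsilon> * real n)"
proof -
  note G = assms(1) and reg = assms(2) and exp = assms(3)
  define k where "k = nat \<lfloor>(1 - \<epsilon>) * real n\<rfloor>"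
  have "(1 - \<epsilon>) * real n = real n - \<epsilon> * real n" by (simp add: algebra_simps)
  then have "(1 - \<epsilon>) * real n \<in> \<int>" using assms(6) by simp
  moreover have "0 \<le> (1 - \<epsilon>) * real n" using assms(5) by simp
  ultimately have k: "real k = (1 - \<epsilon>) * real n"
    unfolding k_def by (rule of_nat_nat_floor_of_Ints)
  consider "d = 0" | "n = 0" "d \<noteq> 0" | "0 < d" "0 < n" by blast
  then show ?thesis
  proof cases
    case 1
    then show ?thesis by simp
  next
    case 2
    then show ?thesis using num_matchings_0[OF G] by simp
  next
    case 3
    have "(real d / exp 1) powr (real n * (1 - \<epsilon>)) * exp (- 2 * \<epsilon> * real n) \<le> (real d / exp 1)^k"
      using k \<open>0 < d\<close> assms(4) by (simp add: powr_realpow[symmetric] mult.commute mult_left_le)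
    also have "\<dots> \<le> real (num_matchings E k)"
      using num_matchings_expander_ge[OF G reg _ exp _ assms(4) _ k] 3 assms(5) by simp
    finally show ?thesis unfolding k_def by simp
  qed
qed

end
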